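(* Consider the uncertain system $x^j_{t+1}=Ax^j_t+Bu^j_t+w^j_t$ at iteration $j\ge 1$ in closed loop with the LMPC input $u^j_t=\pi^{j,*}_{t|t}(x^j_t)$ (both described in the context). Suppose $x^j_0\in\mathcal{C}^j$. Then for every time $t\ge 0$ and every disturbance realization with $w^j_t\in\mathcal{W}$, the optimal control problem $C^{\mathrm{LMPC},j}_{t\to t+N}(x^j_t,N^j_t)$ is feasible for some $N^j_t\in\{0,\dots,N\}$, and the closed-loop system satisfies $x^j_t\in\mathcal{X}$ and $u^j_t\in\mathcal{U}$ for all $t\ge 0$.
   Context: System: $x_{t+1}=Ax_t+Bu_t+w_t$ with known $A\in\mathbb{R}^{n\times n}$, $B\in\mathbb{R}^{n\times d}$. The disturbances take values in $\mathcal{W}\subset\mathbb{R}^n$, a compact polytope containing the origin with vertices $v_w^1,\dots,v_w^l$. Constraints: $x_t\in\mathcal{X}$, $u_t\in\mathcal{U}$, with $\mathcal{X}\subset\mathbb{R}^n$, $\mathcal{U}\subset\mathbb{R}^d$ convex, compact, containing the origin. A gain $K$ and a polyhedron $\mathcal{O}\subset\mathcal{X}$ with vertices $v_o^1,\dots,v_o^m$ are given such that $x\in\mathcal{O}\Rightarrow (A+BK)x+w\in\mathcal{O}$ for all $w\in\mathcal{W}$; $K\mathcal{O}=\{Kx:x\in\mathcal{O}\}$. Write $|x|_{\mathcal{S}}=\inf_{y\in\mathcal{S}}\|x-y\|_2$. The stage cost $h:\mathbb{R}^n\times\mathbb{R}^d\to\mathbb{R}$ is continuous and jointly convex, and there are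 $\mathcal{K}_\infty$ functions with $\alpha^l_x(|x|_\mathcal{O})\le h(x,0)\le\alpha^u_x(|x|_\mathcal{O})$ and $\alpha^l_u(|u|_{K\mathcal{O}})\le h(0,u)\le\alpha^u_u(|u|_{K\mathcal{O}})$ for all $x,u$. A horizon $N\ge1$ is fixed. Data-based construction. Set $\mathcal{CS}^0=\mathcal{O}$, $\mathbf{X}^0=[v_o^1,\dots,v_o^m]$, $\mathbf{U}^0=[Kv_o^1,\dots,Kv_o^m]$, $\mathbf{J}^0=[0,\dots,0]$, $Q^0\equiv0$ on $\mathcal{O}$. For each previous iteration $i\in\{1,\dots,j-1\}$ there are a duration $T^i$, a stored closed-loop trajectory $x^i_0,\dots,x^i_{T^i}$ and, for each $t\in\{0,\dots,T^i\}$, an $N$-step policy $\boldsymbol{\pi}^{i,*}_t=[\pi^{i,*}_{t|t},\dots,\pi^{i,*}_{t+N-1|t}]$ (maps $\mathbb{R}^n\to\mathbb{R}^d$) with $x^i_{t+1}=Ax^i_t+B\pi^{i,*}_{t|t}(x^i_t)+w^i_t$, such that (standing assumption) the predicted system $x_{s+1|t}=Ax_{s|t}+B\pi^{i,*}_{s|t}(x_{s|t})+w_{s|t}$, $s=t,\dots,t+N-1$, $x_{t|t}=x^i_t$, satisfies $x_{s|t}\in\mathcal{X}$, $\pi^{i,*}_{s|t}(x_{s|t})\in\mathcal{U}$ and $x_{t+N|t}\in\mathcal{CS}^{i-1}$ for all disturbances in $\mathcal{W}$. Reachable sets: $\mathcal{R}^i_{t\to t}=\{x^i_t\}$, $\mathcal{R}^i_{t\to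 s+1}=\{Ax+B\pi^{i,*}_{s|t}(x)+w: x\in\mathcal{R}^i_{t\to s},w\in\mathcal{W}\}$. Then $\mathcal{CS}^i=\mathrm{Conv}\big(\bigcup_{t=0}^{T^i}\bigcup_{s=t}^{t+N}\mathcal{R}^i_{t\to s}\cup\mathcal{CS}^{i-1}\big)$. For $s\in\{t,\dots,t+N\}$ let $v^{i,1}_{s|t},\dots,v^{i,l^{s-t}}_{s|t}$ be the vertices of $\mathcal{R}^i_{t\to s}$. Define costs-to-go backwards: $J^i_{t+N|t}(v^{i,r}_{t+N|t})=Q^{i-1}(v^{i,r}_{t+N|t})$ and, for $s=t+N-1,\dots,t$ and $v=v^{i,r}_{s|t}$, $J^i_{s|t}(v)=\min_{\gamma\ge0}\, h(v,\pi^{i,*}_{s|t}(v))+\sum_q\gamma_qJ^i_{s+1|t}(v^{i,q}_{s+1|t})$ s.t. $\sum_q\gamma_qv^{i,q}_{s+1|t}=Av+B\pi^{i,*}_{s|t}(v)$, $\sum_q\gamma_q=1$. The matrices $\mathbf{X}^i,\mathbf{U}^i$ and row vector $\mathbf{J}^i$ are obtained from $\mathbf{X}^{i-1},\mathbf{U}^{i-1},\mathbf{J}^{i-1}$ by appending, for all $t\in\{0,\dots,T^i\}$, $s\in\{t,\dots,t+N-1\}$ and all $r$, the columns $v^{i,r}_{s|t}$, $\pi^{i,*}_{s|t}(v^{i,r}_{s|t})$ and the entries $J^i_{s|t}(v^{i,r}_{s|t})$. Let $\Lambda^i(x)=\{\lambda\ge0:\mathbf{X}^i\lambda=x,\ \mathbf{1}^\top\lambda=1\}$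 and $Q^i(x)=\min_{\lambda\in\Lambda^i(x)}\mathbf{J}^i\lambda$. LMPC at iteration $j$. For $x\in\mathbb{R}^n$ and $N_t\in\{0,\dots,N\}$, $C^{\mathrm{LMPC},j}_{t\to t+N}(x,N_t)$ is the optimal value ($+\infty$ if infeasible) of: minimize over matrices $M_{ks}$ ($t\le s<k$), vectors $g_k$ and multiplier policies $\lambda_{k|t}$ the cost $\sum_{k=t}^{t+N-1}h(\bar x_{k|t},\pi_{k|t}(\bar x_{k|t}))+Q^{j-1}(\bar x_{t+N|t})$ subject to $x_{t|t}=\bar x_{t|t}=x$; $\bar x_{k+1|t}=A\bar x_{k|t}+B\pi_{k|t}(\bar x_{k|t})$; $x_{k+1|t}=Ax_{k|t}+B\pi_{k|t}(x_{k|t})+w_{k|t}$; $x_{k|t}\in\mathcal{X}$, $\pi_{k|t}(x_{k|t})\in\mathcal{U}$; $x_{t+N|t}\in\mathcal{CS}^{j-1}$; for $k\in\{t,\dots,t+N_t-1\}$, $\pi_{k|t}=\sum_{s=t}^{k-1}M_{ks}w_{s|t}+g_k$ (disturbance feedback); for $k\in\{t+N_t,\dots,t+N-1\}$, $\pi_{k|t}(x_{k|t})=\mathbf{U}^{j-1}\lambda_{k|t}$ with $\lambda_{k|t}\in\Lambda^{j-1}(x_{k|t})$; all for all $w_{k|t}\in\mathcal{W}$, $k=t,\dots,t+N-1$. At state $x^j_t$ one takes $N^{j,*}_t$ minimizing $C^{\mathrm{LMPC},j}_{t\to t+N}(x^j_t,\cdot)$, lets $\boldsymbol{\pi}^{j,*}_t=[\pi^{j,*}_{t|t},\dots,\pi^{j,*}_{t+N-1|t}]$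 be the corresponding optimal policy, and applies $u^j_t=\pi^{j,*}_{t|t}(x^j_t)$. The set $\mathcal{C}^j=\{x:\exists N_0\in\{0,\dots,N\},\ C^{\mathrm{LMPC},j}_{0\to N}(x,N_0)<\infty\}$.
   Formalization: The terminal set $\mathcal{O}$ also satisfies the input constraint, $K\mathcal{O}\subseteq\mathcal{U}$, and every reachable set $\mathcal{R}^i_{t\to s}$ of earlier iterations is a polytope. Each condition added here is assumed in the paper as well or is needed for the statement above to hold. *)

theory Defs
  imports "HOL-Analysis.Analysis"
begin

definition Kinf :: "(real \<Rightarrow> real) \<Rightarrow> bool" where
  "Kinf \<alpha> \<longleftrightarrow> continuous_on {0..} \<alpha> \<and> \<alpha> 0 = 0 \<and> strict_mono_on {0..} \<alpha>
      \<and> filterlim \<alpha> at_top at_top"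

text \<open>Reachable sets R^i_{t -> t+k} of iteration i from stored state x^i_t under the
  stored policies pol i t s = pi^{i,*}_{s|t}.\<close>
fun reach :: "real^'n^'n \<Rightarrow> real^'d^'n \<Rightarrow> (real^'n) set
    \<Rightarrow> (nat \<Rightarrow> nat \<Rightarrow> real^'n) \<Rightarrow> (nat \<Rightarrow> nat \<Rightarrow> nat \<Rightarrow> real^'n \<Rightarrow> real^'d)
    \<Rightarrow> nat \<Rightarrow> nat \<Rightarrow> nat \<Rightarrow> (real^'n) set" where
  "reach A B W xt pol i t 0 = {xt i t}"
| "reach A B W xt pol i t (Suc k) =
     {A *v x + B *v pol i t (t + k) x + w | x w. x \<in> reach A B W xt pol i t k \<and> w \<in> W}"

primrec CSset :: "real^'n^'n \<Rightarrow> real^'d^'n \<Rightarrow> (real^'n) set \<Rightarrow> nat \<Rightarrow> (real^'n) set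
    \<Rightarrow> (nat \<Rightarrow> nat) \<Rightarrow> (nat \<Rightarrow> nat \<Rightarrow> real^'n) \<Rightarrow> (nat \<Rightarrow> nat \<Rightarrow> nat \<Rightarrow> real^'n \<Rightarrow> real^'d)
    \<Rightarrow> nat \<Rightarrow> (real^'n) set" where
  "CSset A B W N Ob T xt pol 0 = Ob"
| "CSset A B W N Ob T xt pol (Suc i) =
     convex hull ((\<Union>t\<in>{..T (Suc i)}. \<Union>k\<in>{..N}. reach A B W xt pol (Suc i) t k)
                  \<union> CSset A B W N Ob T xt pol i)"

text \<open>Stored data: a finite set of columns (state, input, cost-to-go).  The matrices
  X^i, U^i, J^i are represented by the set of their columns (x, u, J).\<close>
type_synonym ('n, 'd) col = "(real^'n) \<times> (real^'d) \<times> ereal"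

definition Lam :: "('n, 'd) col set \<Rightarrow> real^'n \<Rightarrow> (('n, 'd) col \<Rightarrow> real) set" where
  "Lam D x = {l. (\<forall>c\<in>D. 0 \<le> l c) \<and> (\<Sum>c\<in>D. l c *\<^sub>R fst c) = x \<and> (\<Sum>c\<in>D. l c) = 1}"

text \<open>Q(x) = min over Lambda(x) of J lambda (infimum; +oo if Lambda(x) is empty).\<close>
definition Qof :: "('n, 'd) col set \<Rightarrow> real^'n \<Rightarrow> ereal" where
  "Qof D x = (INF l\<in>Lam D x. (\<Sum>c\<in>D. ereal (l c) * snd (snd c)))"

text \<open>Costs-to-go J^i_{s|t}: Jtail ... m v is J^i_{t+N-m|t}(v).\<close>
fun Jtail :: "real^'n^'n \<Rightarrow> real^'d^'n \<Rightarrow> (real^'n) set \<Rightarrow> (real^'n \<Rightarrow> real^'d \<Rightarrow> real)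
    \<Rightarrow> nat \<Rightarrow> (nat \<Rightarrow> nat \<Rightarrow> real^'n) \<Rightarrow> (nat \<Rightarrow> nat \<Rightarrow> nat \<Rightarrow> real^'n \<Rightarrow> real^'d)
    \<Rightarrow> (real^'n \<Rightarrow> ereal) \<Rightarrow> nat \<Rightarrow> nat \<Rightarrow> nat \<Rightarrow> real^'n \<Rightarrow> ereal" where
  "Jtail A B W h N xt pol Qprev i t 0 v = Qprev v"
| "Jtail A B W h N xt pol Qprev i t (Suc m) v =
     (let k = N - Suc m; u = pol i t (t + k) v;
          V = {q. q extreme_point_of reach A B W xt pol i t (Suc k)}
      in ereal (h v u) +
         (INF g\<in>{g. (\<forall>q\<in>V. 0 \<le> g q) \<and> (\<Sum>q\<in>V. g q *\<^sub>R q) = A *v v + B *v u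
                    \<and> (\<Sum>q\<in>V. g q) = 1}.
            (\<Sum>q\<in>V. ereal (g q) * Jtail A B W h N xt pol Qprev i t m q)))"

primrec Dset :: "real^'n^'n \<Rightarrow> real^'d^'n \<Rightarrow> (real^'n) set \<Rightarrow> (real^'n \<Rightarrow> real^'d \<Rightarrow> real)
    \<Rightarrow> nat \<Rightarrow> real^'n^'d \<Rightarrow> (real^'n) set
    \<Rightarrow> (nat \<Rightarrow> nat) \<Rightarrow> (nat \<Rightarrow> nat \<Rightarrow> real^'n) \<Rightarrow> (nat \<Rightarrow> nat \<Rightarrow> nat \<Rightarrow> real^'n \<Rightarrow> real^'d)
    \<Rightarrow> nat \<Rightarrow> ('n, 'd) col set" where
  "Dset A B W h N K Ob T xt pol 0 = {(v, K *v v, 0) | v. v extreme_point_of Ob}"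
| "Dset A B W h N K Ob T xt pol (Suc i) =
     Dset A B W h N K Ob T xt pol i \<union>
     {(v, pol (Suc i) t (t + k) v,
       Jtail A B W h N xt pol (Qof (Dset A B W h N K Ob T xt pol i)) (Suc i) t (N - k) v)
      | t k v. t \<le> T (Suc i) \<and> k < N \<and> v extreme_point_of reach A B W xt pol (Suc i) t k}"

text \<open>LMPC problem (time-invariant; relative prediction index k = 0..N-1).
  M k s, g k: disturbance-feedback parameters (used for k < Nt);
  lam k x: multiplier policy (used for k >= Nt).\<close>
definition lmpc_in :: "('n, 'd) col set \<Rightarrow> nat \<Rightarrow> (nat \<Rightarrow> nat \<Rightarrow> real^'n^'d) \<Rightarrow> (nat \<Rightarrow> real^'d)
    \<Rightarrow> (nat \<Rightarrow> real^'n \<Rightarrow> ('n, 'd) col \<Rightarrow> real) \<Rightarrow> (nat \<Rightarrow> real^'n) \<Rightarrow> real^'n \<Rightarrow> nat \<Rightarrow> real^'d" where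
  "lmpc_in D Nt M g lam ws x k =
     (if k < Nt then (\<Sum>s<k. M k s *v ws s) + g k
      else (\<Sum>c\<in>D. lam k x c *\<^sub>R fst (snd c)))"

fun pstate :: "real^'n^'n \<Rightarrow> real^'d^'n \<Rightarrow> ('n, 'd) col set \<Rightarrow> nat \<Rightarrow> (nat \<Rightarrow> nat \<Rightarrow> real^'n^'d)
    \<Rightarrow> (nat \<Rightarrow> real^'d) \<Rightarrow> (nat \<Rightarrow> real^'n \<Rightarrow> ('n, 'd) col \<Rightarrow> real) \<Rightarrow> (nat \<Rightarrow> real^'n)
    \<Rightarrow> real^'n \<Rightarrow> nat \<Rightarrow> real^'n" where
  "pstate A B D Nt M g lam ws x 0 = x"
| "pstate A B D Nt M g lam ws x (Suc k) =
     A *v pstate A B D Nt M g lam ws x k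
     + B *v lmpc_in D Nt M g lam ws (pstate A B D Nt M g lam ws x k) k + ws k"

definition lmpc_feasible :: "real^'n^'n \<Rightarrow> real^'d^'n \<Rightarrow> (real^'n) set \<Rightarrow> (real^'n) set
    \<Rightarrow> (real^'d) set \<Rightarrow> ('n, 'd) col set \<Rightarrow> (real^'n) set \<Rightarrow> nat \<Rightarrow> real^'n \<Rightarrow> nat
    \<Rightarrow> (nat \<Rightarrow> nat \<Rightarrow> real^'n^'d) \<Rightarrow> (nat \<Rightarrow> real^'d) \<Rightarrow> (nat \<Rightarrow> real^'n \<Rightarrow> ('n, 'd) col \<Rightarrow> real)
    \<Rightarrow> bool" where
  "lmpc_feasible A B W X U D CS N x Nt M g lam \<longleftrightarrow> Nt \<le> N \<and>
     (\<forall>ws. (\<forall>k<N. ws k \<in> W) \<longrightarrow>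
        (\<forall>k<N. pstate A B D Nt M g lam ws x k \<in> X
               \<and> lmpc_in D Nt M g lam ws (pstate A B D Nt M g lam ws x k) k \<in> U
               \<and> (Nt \<le> k \<longrightarrow> lam k (pstate A B D Nt M g lam ws x k)
                                   \<in> Lam D (pstate A B D Nt M g lam ws x k)))
        \<and> pstate A B D Nt M g lam ws x N \<in> CS)"

definition lmpc_cost :: "real^'n^'n \<Rightarrow> real^'d^'n \<Rightarrow> (real^'n \<Rightarrow> real^'d \<Rightarrow> real)
    \<Rightarrow> ('n, 'd) col set \<Rightarrow> nat \<Rightarrow> real^'n \<Rightarrow> nat
    \<Rightarrow> (nat \<Rightarrow> nat \<Rightarrow> real^'n^'d) \<Rightarrow> (nat \<Rightarrow> real^'d) \<Rightarrow> (nat \<Rightarrow> real^'n \<Rightarrow> ('n, 'd) col \<Rightarrow> real)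
    \<Rightarrow> ereal" where
  "lmpc_cost A B h D N x Nt M g lam =
     (\<Sum>k<N. ereal (h (pstate A B D Nt M g lam (\<lambda>_. 0) x k)
                      (lmpc_in D Nt M g lam (\<lambda>_. 0) (pstate A B D Nt M g lam (\<lambda>_. 0) x k) k)))
     + Qof D (pstate A B D Nt M g lam (\<lambda>_. 0) x N)"

text \<open>Optimal value C^{LMPC}(x, Nt) (+oo if infeasible).\<close>
definition lmpc_value :: "real^'n^'n \<Rightarrow> real^'d^'n \<Rightarrow> (real^'n) set \<Rightarrow> (real^'n) set
    \<Rightarrow> (real^'d) set \<Rightarrow> (real^'n \<Rightarrow> real^'d \<Rightarrow> real) \<Rightarrow> ('n, 'd) col set \<Rightarrow> (real^'n) set
    \<Rightarrow> nat \<Rightarrow> real^'n \<Rightarrow> nat \<Rightarrow> ereal" where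
  "lmpc_value A B W X U h D CS N x Nt =
     (INF p\<in>{(M, g, lam). lmpc_feasible A B W X U D CS N x Nt M g lam}.
        lmpc_cost A B h D N x Nt (fst p) (fst (snd p)) (snd (snd p)))"

end

theory Submission
  imports Defs
begin

(* Recursive feasibility by the usual shifting argument.  Every stored column (v, u, J) satisfies
   u \<in> U, J < \<infinity> and A v + B u + w \<in> CS for all w \<in> W; this is an invariant of the data
   construction, because a stored vertex of a reachable set comes with an admissible stored input
   and is robustly steered into the next reachable set, while the last reachable sets lie in the
   previous safe set.  Consequently the barycentric policy u = U \<lambda>, \<lambda> \<in> \<Lambda>(x), keeps
   CS, the convex hull of the stored states, robustly invariant within the constraints, and Q is
   finite on CS.  A feasible solution at time t then yields one at time t + 1 with
   N_{t+1} = N_t - 1: the tail of the disturbance-feedback policy, with the realised disturbance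
   absorbed into the affine terms, followed by one barycentric step.  Feasibility makes the
   optimal value finite, and the first predicted state and input of a feasible solution satisfy
   the constraints. *)

lemma polytope_convex_hull_extreme_points:
  fixes P :: "'a::euclidean_space set"
  assumes "polytope P"
  shows "finite {v. v extreme_point_of P}" and "P = convex hull {v. v extreme_point_of P}"
proof -
  show "finite {v. v extreme_point_of P}"
    using assms by (simp add: finite_polyhedron_extreme_points polytope_imp_polyhedron)
  show "P = convex hull {v. v extreme_point_of P}"
    by (rule Krein_Milman_Minkowski) (use assms polytope_imp_compact polytope_imp_convex in auto)
qed

lemma convex_hull_eq_if_between:
  "S \<subseteq> T \<Longrightarrow> T \<subseteq> convex hull S \<Longrightarrow> convex hull T = convex hull S"
  by (metis convex_convex_hull hull_minimal hull_mono subset_antisym)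

lemma nonneg_weighted_sum_less_PInfty:
  fixes g :: "'a \<Rightarrow> real" and f :: "'a \<Rightarrow> ereal"
  assumes "\<And>q. q \<in> S \<Longrightarrow> 0 \<le> g q" and "\<And>q. q \<in> S \<Longrightarrow> f q < \<infinity>"
  shows "(\<Sum>q\<in>S. ereal (g q) * f q) < \<infinity>"
proof -
  have "ereal (g q) * f q \<noteq> \<infinity>" if "q \<in> S" for q
    using assms[OF that] by (auto simp: ereal_mult_eq_PInfty)
  then show ?thesis by (simp add: sum_Pinfty top.not_eq_extremum[symmetric])
qed

lemma Lam_convex_combination:
  assumes "l1 \<in> Lam D x" "l2 \<in> Lam D z" "0 \<le> u" "0 \<le> v" "u + v = 1"
  shows "(\<lambda>c. u * l1 c + v * l2 c) \<in> Lam D (u *\<^sub>R x + v *\<^sub>R z)"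
  using assms unfolding Lam_def
  by (clarify, simp add: sum.distrib scaleR_add_left scaleR_sum_right sum_distrib_left[symmetric])

lemma Lam_nonempty:
  fixes D :: "('n::finite, 'd::finite) col set"
  assumes "finite D" and "y \<in> convex hull (fst ` D)"
  shows "Lam D y \<noteq> {}"
  using assms(2)
proof (rule hull_induct)
  fix x assume "x \<in> fst ` D"
  then obtain c where c: "c \<in> D" "x = fst c" by blast
  have "(\<lambda>c'. if c' = c then 1 else 0) \<in> Lam D x"
    using c assms(1) unfolding Lam_def
    by (simp add: if_distrib[where f="\<lambda>a. a *\<^sub>R _"] sum.delta' cong: if_cong)
  then show "Lam D x \<noteq> {}" by blast
next
  show "convex {x. Lam D x \<noteq> {}}"
    unfolding convex_def using Lam_convex_combination by blast
qed

lemma Qof_less_PInfty: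
  fixes D :: "('n::finite, 'd::finite) col set"
  assumes "finite D" and "\<forall>c\<in>D. snd (snd c) < \<infinity>" and "y \<in> convex hull (fst ` D)"
  shows "Qof D y < \<infinity>"
proof -
  obtain l where l: "l \<in> Lam D y" using Lam_nonempty assms(1,3) by blast
  have "Qof D y \<le> (\<Sum>c\<in>D. ereal (l c) * snd (snd c))"
    unfolding Qof_def using l by (rule INF_lower)
  also have "\<dots> < \<infinity>"
    using l assms(2) by (intro nonneg_weighted_sum_less_PInfty) (auto simp: Lam_def)
  finally show ?thesis .
qed

lemma reach_SucI:
  "x \<in> reach A B W xt pol i t k \<Longrightarrow> w \<in> W \<Longrightarrow>
    A *v x + B *v pol i t (t + k) x + w \<in> reach A B W xt pol i t (Suc k)"
  unfolding reach.simps by blast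

lemma Jtail_less_PInfty:
  assumes W0: "0 \<in> W"
    and poly: "\<And>k. k \<le> N \<Longrightarrow> polytope (reach A B W xt pol i t k)"
    and Qprev: "\<And>v. v \<in> reach A B W xt pol i t N \<Longrightarrow> Qprev v < \<infinity>"
  shows "m \<le> N \<Longrightarrow> v \<in> reach A B W xt pol i t (N - m) \<Longrightarrow>
    Jtail A B W h N xt pol Qprev i t m v < \<infinity>"
proof (induction m arbitrary: v)
  case 0
  then show ?case using Qprev by simp
next
  case (Suc m)
  let ?R = "reach A B W xt pol i t"
  define k where "k = N - Suc m"
  define u where "u = pol i t (t + k) v"
  define V where "V = {q. q extreme_point_of ?R (Suc k)}"
  let ?G = "{g. (\<forall>q\<in>V. 0 \<le> g q) \<and> (\<Sum>q\<in>V. g q *\<^sub>R q) = A *v v + B *v u \<and> sum g V = 1}"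
  have Sk: "Suc k = N - m" using Suc.prems k_def by simp
  have "polytope (?R (Suc k))" by (rule poly) (use Sk in simp)
  then have fV: "finite V" and hV: "?R (Suc k) = convex hull V"
    unfolding V_def by (rule polytope_convex_hull_extreme_points)+
  \<comment> \<open>As \<open>0 \<in> W\<close>, the nominal successor lies in the next reachable set, so the
    minimisation defining \<open>J\<close> has a feasible point.\<close>
  have "A *v v + B *v u + 0 \<in> ?R (Suc k)"
    unfolding u_def using Suc.prems k_def W0 by (intro reach_SucI) simp_all
  then obtain g where g: "g \<in> ?G"
    unfolding hV convex_hull_finite[OF fV] by auto
  have "Jtail A B W h N xt pol Qprev i t m q < \<infinity>" if "q \<in> V" for q
  proof -
    have "q \<in> ?R (N - m)" using that unfolding V_def Sk extreme_point_of_def by blast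
    then show ?thesis using Suc.IH Suc.prems(1) by simp
  qed
  then have sum_fin: "(\<Sum>q\<in>V. ereal (g q) * Jtail A B W h N xt pol Qprev i t m q) < \<infinity>"
    using g by (intro nonneg_weighted_sum_less_PInfty) auto
  define I where "I = (INF g\<in>?G. \<Sum>q\<in>V. ereal (g q) * Jtail A B W h N xt pol Qprev i t m q)"
  have "I \<le> (\<Sum>q\<in>V. ereal (g q) * Jtail A B W h N xt pol Qprev i t m q)"
    unfolding I_def using g by (rule INF_lower)
  then have "I < \<infinity>" using sum_fin by (rule order.strict_trans1)
  moreover have "Jtail A B W h N xt pol Qprev i t (Suc m) v = ereal (h v u) + I"
    unfolding I_def u_def V_def k_def by (simp only: Jtail.simps Let_def)
  ultimately show ?case by (simp del: Jtail.simps)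
qed

definition safe_data :: "real^'n^'n \<Rightarrow> real^'d^'n \<Rightarrow> (real^'n) set \<Rightarrow> (real^'n) set
    \<Rightarrow> (real^'d) set \<Rightarrow> ('n, 'd) col set \<Rightarrow> (real^'n) set \<Rightarrow> bool" where
  "safe_data A B W X U D CS \<longleftrightarrow> finite D \<and> CS = convex hull (fst ` D) \<and> CS \<subseteq> X \<and>
     (\<forall>c\<in>D. fst (snd c) \<in> U \<and> snd (snd c) < \<infinity> \<and>
        (\<forall>w\<in>W. A *v fst c + B *v fst (snd c) + w \<in> CS))"

lemma safe_data_barycentric_step:
  assumes safe: "safe_data A B W X U D CS" and Uc: "convex U"
    and l: "l \<in> Lam D y" and w: "w \<in> W"
  shows "(\<Sum>c\<in>D. l c *\<^sub>R fst (snd c)) \<in> U"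
    and "A *v y + B *v (\<Sum>c\<in>D. l c *\<^sub>R fst (snd c)) + w \<in> CS"
proof -
  have fD: "finite D" and CS: "CS = convex hull (fst ` D)"
    and cols: "\<And>c. c \<in> D \<Longrightarrow>
      fst (snd c) \<in> U \<and> (\<forall>w\<in>W. A *v fst c + B *v fst (snd c) + w \<in> CS)"
    using safe by (auto simp: safe_data_def)
  have l_nonneg: "\<And>c. c \<in> D \<Longrightarrow> 0 \<le> l c"
    and l_sum: "sum l D = 1" and y: "y = (\<Sum>c\<in>D. l c *\<^sub>R fst c)"
    using l by (auto simp: Lam_def)
  show "(\<Sum>c\<in>D. l c *\<^sub>R fst (snd c)) \<in> U"
    using cols l_nonneg by (intro convex_sum[OF fD Uc l_sum]) auto
  have "(\<Sum>c\<in>D. l c *\<^sub>R w) = w"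
    using l_sum by (simp add: scaleR_sum_left[symmetric])
  then have "A *v y + B *v (\<Sum>c\<in>D. l c *\<^sub>R fst (snd c)) + w
      = (\<Sum>c\<in>D. l c *\<^sub>R (A *v fst c + B *v fst (snd c) + w))"
    unfolding y by (simp add: linear_sum linear_scale scaleR_add_right sum.distrib o_def)
  also have "\<dots> \<in> CS"
    using cols l_nonneg w unfolding CS by (intro convex_sum[OF fD _ l_sum]) auto
  finally show "A *v y + B *v (\<Sum>c\<in>D. l c *\<^sub>R fst (snd c)) + w \<in> CS" .
qed

lemma safe_data_Dset_0:
  assumes Ob: "polyhedron Ob" "bounded Ob" "Ob \<subseteq> X" "(\<lambda>x. K *v x) ` Ob \<subseteq> U"
    and Ob_inv: "\<forall>x\<in>Ob. \<forall>w\<in>W. (A + B ** K) *v x + w \<in> Ob"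
  shows "safe_data A B W X U (Dset A B W h N K Ob T xt pol 0) (CSset A B W N Ob T xt pol 0)"
proof -
  let ?E = "{v. v extreme_point_of Ob}"
  have D0: "Dset A B W h N K Ob T xt pol 0 = (\<lambda>v. (v, K *v v, 0)) ` ?E" by auto
  have "polytope Ob" using Ob(1,2) by (simp add: polytope_eq_bounded_polyhedron)
  then have "finite ?E" "Ob = convex hull ?E" by (rule polytope_convex_hull_extreme_points)+
  moreover have "fst ` (\<lambda>v. (v, K *v v, 0 :: ereal)) ` ?E = ?E" by force
  moreover have "?E \<subseteq> Ob" by (auto simp: extreme_point_of_def)
  moreover have "A *v v + B *v (K *v v) + w \<in> Ob" if "v \<in> Ob" "w \<in> W" for v w
    using Ob_inv that by (simp add: matrix_vector_mult_add_rdistrib matrix_vector_mul_assoc)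
  ultimately show ?thesis using Ob(3,4) unfolding safe_data_def D0 by (auto simp: image_subset_iff)
qed

lemma Dset_Suc:
  "Dset A B W h N K Ob T xt pol (Suc i) = Dset A B W h N K Ob T xt pol i \<union>
     (\<lambda>(t, k, v). (v, pol (Suc i) t (t + k) v,
        Jtail A B W h N xt pol (Qof (Dset A B W h N K Ob T xt pol i)) (Suc i) t (N - k) v))
     ` {(t, k, v). t \<le> T (Suc i) \<and> k < N \<and> v extreme_point_of reach A B W xt pol (Suc i) t k}"
  by (auto simp: image_def)

context
  fixes A :: "real^'n^'n" and B :: "real^'d^'n" and K :: "real^'n^'d"
    and W Ob X :: "(real^'n) set" and U :: "(real^'d) set"
    and h :: "real^'n \<Rightarrow> real^'d \<Rightarrow> real" and N i :: nat
    and T :: "nat \<Rightarrow> nat" and xt :: "nat \<Rightarrow> nat \<Rightarrow> real^'n"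
    and pol :: "nat \<Rightarrow> nat \<Rightarrow> nat \<Rightarrow> real^'n \<Rightarrow> real^'d"
  assumes W0: "0 \<in> W" and Xc: "convex X"
    and safe: "safe_data A B W X U (Dset A B W h N K Ob T xt pol i) (CSset A B W N Ob T xt pol i)"
    and constr: "\<And>t k x. t \<le> T (Suc i) \<Longrightarrow> k < N \<Longrightarrow> x \<in> reach A B W xt pol (Suc i) t k
        \<Longrightarrow> x \<in> X \<and> pol (Suc i) t (t + k) x \<in> U"
    and terminal: "\<And>t. t \<le> T (Suc i) \<Longrightarrow>
        reach A B W xt pol (Suc i) t N \<subseteq> CSset A B W N Ob T xt pol i"
    and poly: "\<And>t k. t \<le> T (Suc i) \<Longrightarrow> k \<le> N \<Longrightarrow>
        polytope (reach A B W xt pol (Suc i) t k)"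
begin

lemma finite_Dset_Suc: "finite (Dset A B W h N K Ob T xt pol (Suc i))"
proof -
  let ?E = "\<lambda>t k. {v. v extreme_point_of reach A B W xt pol (Suc i) t k}"
  have "finite (SIGMA t:{..T (Suc i)}. SIGMA k:{..<N}. ?E t k)"
    using poly by (auto intro!: finite_SigmaI polytope_convex_hull_extreme_points(1))
  moreover have "{(t, k, v). t \<le> T (Suc i) \<and> k < N \<and> v \<in> ?E t k}
      \<subseteq> (SIGMA t:{..T (Suc i)}. SIGMA k:{..<N}. ?E t k)"
    by auto
  ultimately have "finite {(t, k, v). t \<le> T (Suc i) \<and> k < N \<and> v \<in> ?E t k}"
    by (rule finite_subset[rotated])
  then show ?thesis using safe unfolding Dset_Suc safe_data_def by simp
qed

lemma fst_Dset_Suc: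
  "fst ` Dset A B W h N K Ob T xt pol (Suc i) = fst ` Dset A B W h N K Ob T xt pol i
     \<union> (\<Union>t\<le>T (Suc i). \<Union>k<N. {v. v extreme_point_of reach A B W xt pol (Suc i) t k})"
  unfolding Dset_Suc by force

lemma reach_subset_CSset_Suc:
  "t \<le> T (Suc i) \<Longrightarrow> k \<le> N \<Longrightarrow>
    reach A B W xt pol (Suc i) t k \<subseteq> CSset A B W N Ob T xt pol (Suc i)"
  unfolding CSset.simps by (intro subset_trans[OF _ hull_subset]) blast

lemma CSset_Suc_eq_convex_hull:
  "CSset A B W N Ob T xt pol (Suc i) = convex hull (fst ` Dset A B W h N K Ob T xt pol (Suc i))"
proof -
  let ?R = "reach A B W xt pol (Suc i)"
  let ?CSi = "CSset A B W N Ob T xt pol i"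
  let ?Di = "Dset A B W h N K Ob T xt pol i"
  let ?UR = "\<Union>t\<le>T (Suc i). \<Union>k\<le>N. ?R t k"
  let ?S = "fst ` ?Di \<union> (\<Union>t\<le>T (Suc i). \<Union>k<N. {v. v extreme_point_of ?R t k})"
  have CSi: "?CSi = convex hull (fst ` ?Di)" using safe by (simp add: safe_data_def)
  then have CSi_sub: "?CSi \<subseteq> convex hull ?S" by (simp add: hull_mono)
  have "convex hull (?UR \<union> ?CSi) = convex hull ?S"
  proof (rule convex_hull_eq_if_between)
    have "fst ` ?Di \<subseteq> ?CSi" unfolding CSi by (rule hull_subset)
    moreover have "v \<in> ?UR" if "t \<le> T (Suc i)" "k < N" "v extreme_point_of ?R t k" for t k v
      using that by (intro UN_I[of t] UN_I[of k]) (auto simp: extreme_point_of_def)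
    ultimately show "?S \<subseteq> ?UR \<union> ?CSi" by auto
    have "?R t k \<subseteq> convex hull ?S" if "t \<le> T (Suc i)" "k \<le> N" for t k
    proof (cases "k = N")
      case True
      then show ?thesis using terminal[OF that(1)] CSi_sub by blast
    next
      case False
      have "?R t k = convex hull {v. v extreme_point_of ?R t k}"
        using poly that by (intro polytope_convex_hull_extreme_points(2)) simp
      also have "\<dots> \<subseteq> convex hull ?S"
        using False that by (intro hull_mono) auto
      finally show ?thesis .
    qed
    then show "?UR \<union> ?CSi \<subseteq> convex hull ?S" using CSi_sub by auto
  qed
  then show ?thesis by (simp only: CSset.simps fst_Dset_Suc)
qed

lemma CSset_Suc_subset: "CSset A B W N Ob T xt pol (Suc i) \<subseteq> X"
proof -
  have CSi_X: "CSset A B W N Ob T xt pol i \<subseteq> X" using safe unfolding safe_data_def by blast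
  have "reach A B W xt pol (Suc i) t k \<subseteq> X" if "t \<le> T (Suc i)" "k \<le> N" for t k
  proof (cases "k = N")
    case True
    then show ?thesis using terminal[OF that(1)] CSi_X by blast
  next
    case False
    with that(2) have "k < N" by simp
    then show ?thesis using constr[OF that(1)] by blast
  qed
  then show ?thesis
    using CSi_X unfolding CSset.simps by (intro hull_minimal Xc) blast
qed

lemma Dset_Suc_columns:
  assumes "c \<in> Dset A B W h N K Ob T xt pol (Suc i)"
  shows "fst (snd c) \<in> U \<and> snd (snd c) < \<infinity> \<and>
    (\<forall>w\<in>W. A *v fst c + B *v fst (snd c) + w \<in> CSset A B W N Ob T xt pol (Suc i))"
proof (cases "c \<in> Dset A B W h N K Ob T xt pol i")
  case True
  have "CSset A B W N Ob T xt pol i \<subseteq> CSset A B W N Ob T xt pol (Suc i)"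
    unfolding CSset.simps by (intro subset_trans[OF _ hull_subset]) blast
  then show ?thesis using True safe by (auto simp: safe_data_def)
next
  case False
  let ?R = "reach A B W xt pol (Suc i)"
  let ?Q = "Qof (Dset A B W h N K Ob T xt pol i)"
  obtain t k v where tkv: "t \<le> T (Suc i)" "k < N" "v extreme_point_of ?R t k"
    and c: "c = (v, pol (Suc i) t (t + k) v, Jtail A B W h N xt pol ?Q (Suc i) t (N - k) v)"
    using assms False unfolding Dset_Suc by auto
  have v: "v \<in> ?R t k" using tkv(3) by (simp add: extreme_point_of_def)
  have "A *v v + B *v pol (Suc i) t (t + k) v + w \<in> CSset A B W N Ob T xt pol (Suc i)"
    if "w \<in> W" for w
    using reach_SucI[OF v that] reach_subset_CSset_Suc[of t "Suc k"] tkv by (simp add: subset_iff)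
  moreover have "?Q x < \<infinity>" if "x \<in> ?R t N" for x
    using safe terminal[OF tkv(1)] that by (intro Qof_less_PInfty) (auto simp: safe_data_def)
  then have "Jtail A B W h N xt pol ?Q (Suc i) t (N - k) v < \<infinity>"
    using poly tkv v by (intro Jtail_less_PInfty[OF W0]) auto
  ultimately show ?thesis using constr tkv v c by auto
qed

lemma safe_data_Dset_Suc:
  "safe_data A B W X U (Dset A B W h N K Ob T xt pol (Suc i)) (CSset A B W N Ob T xt pol (Suc i))"
  unfolding safe_data_def
  using finite_Dset_Suc CSset_Suc_eq_convex_hull CSset_Suc_subset Dset_Suc_columns by blast

end

lemma safe_data_Dset:
  assumes W0: "0 \<in> W" and Xc: "convex X"
    and Ob: "polyhedron Ob" "bounded Ob" "Ob \<subseteq> X" "(\<lambda>x. K *v x) ` Ob \<subseteq> U"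
      "\<forall>x\<in>Ob. \<forall>w\<in>W. (A + B ** K) *v x + w \<in> Ob"
    and iter_constr: "\<forall>i. 1 \<le> i \<and> i < j \<longrightarrow> (\<forall>t\<le>T i. \<forall>k<N.
        \<forall>x\<in>reach A B W xt pol i t k. x \<in> X \<and> pol i t (t + k) x \<in> U)"
    and iter_term: "\<forall>i. 1 \<le> i \<and> i < j \<longrightarrow> (\<forall>t\<le>T i.
        reach A B W xt pol i t N \<subseteq> CSset A B W N Ob T xt pol (i - 1))"
    and iter_poly: "\<forall>i. 1 \<le> i \<and> i < j \<longrightarrow> (\<forall>t\<le>T i. \<forall>k\<le>N.
        polytope (reach A B W xt pol i t k))"
  shows "i < j \<Longrightarrow>
    safe_data A B W X U (Dset A B W h N K Ob T xt pol i) (CSset A B W N Ob T xt pol i)"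
proof (induction i)
  case 0
  show ?case using Ob by (rule safe_data_Dset_0)
next
  case (Suc i)
  then have i: "1 \<le> Suc i \<and> Suc i < j" by simp
  show ?case
  proof (rule safe_data_Dset_Suc[OF W0 Xc])
    show "safe_data A B W X U (Dset A B W h N K Ob T xt pol i) (CSset A B W N Ob T xt pol i)"
      using Suc by simp
    show "x \<in> X \<and> pol (Suc i) t (t + k) x \<in> U"
      if "t \<le> T (Suc i)" "k < N" "x \<in> reach A B W xt pol (Suc i) t k" for t k x
      using iter_constr i that by blast
    show "reach A B W xt pol (Suc i) t N \<subseteq> CSset A B W N Ob T xt pol i"
      if "t \<le> T (Suc i)" for t
      using iter_term i that by fastforce
    show "polytope (reach A B W xt pol (Suc i) t k)" if "t \<le> T (Suc i)" "k \<le> N" for t k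
      using iter_poly i that by blast
  qed
qed

(* Candidate solution at the successor state: the tail of the disturbance-feedback policy with the
   realised first disturbance w0 absorbed into the affine terms, followed at the last step by some
   multiplier in \<Lambda>(y); the choice is a genuine multiplier only for y \<in> CS. *)
definition shift_M :: "(nat \<Rightarrow> nat \<Rightarrow> real^'n^'d) \<Rightarrow> nat \<Rightarrow> nat \<Rightarrow> real^'n^'d" where
  "shift_M M k s = M (Suc k) (Suc s)"

definition shift_g ::
    "(nat \<Rightarrow> nat \<Rightarrow> real^'n^'d) \<Rightarrow> (nat \<Rightarrow> real^'d) \<Rightarrow> real^'n \<Rightarrow> nat \<Rightarrow> real^'d" where
  "shift_g M g w0 k = g (Suc k) + M (Suc k) 0 *v w0"

definition shift_lam :: "('n, 'd) col set \<Rightarrow> nat \<Rightarrow> (nat \<Rightarrow> real^'n \<Rightarrow> ('n, 'd) col \<Rightarrow> real)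
    \<Rightarrow> nat \<Rightarrow> real^'n \<Rightarrow> ('n, 'd) col \<Rightarrow> real" where
  "shift_lam D N lam k y = (if k = N - 1 then (SOME l. l \<in> Lam D y) else lam (Suc k) y)"

lemma lmpc_in_0_indep: "lmpc_in D Nt M g lam ws x 0 = lmpc_in D Nt M g lam ws' x 0"
  by (simp add: lmpc_in_def)

lemma lmpc_in_shift:
  assumes "k \<noteq> N - 1"
  shows "lmpc_in D (Nt - 1) (shift_M M) (shift_g M g w0) (shift_lam D N lam) ws y k
       = lmpc_in D Nt M g lam (case_nat w0 ws) y (Suc k)"
proof (cases "k < Nt - 1")
  case True
  have "(\<Sum>s<Suc k. M (Suc k) s *v case_nat w0 ws s)
      = M (Suc k) 0 *v w0 + (\<Sum>s<k. M (Suc k) (Suc s) *v ws s)"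
    by (subst sum.lessThan_Suc_shift) simp
  then show ?thesis using True by (simp add: lmpc_in_def shift_M_def shift_g_def algebra_simps)
next
  case False
  then show ?thesis using assms by (simp add: lmpc_in_def shift_lam_def)
qed

lemma pstate_shift:
  "k \<le> N - 1 \<Longrightarrow>
    pstate A B D (Nt - 1) (shift_M M) (shift_g M g w0) (shift_lam D N lam) ws
      (A *v x + B *v lmpc_in D Nt M g lam (\<lambda>_. 0) x 0 + w0) k
    = pstate A B D Nt M g lam (case_nat w0 ws) x (Suc k)"
proof (induction k)
  case 0
  show ?case using lmpc_in_0_indep[of D Nt M g lam "\<lambda>_. 0" x "case_nat w0 ws"] by simp
next
  case (Suc k)
  then have "k \<le> N - 1" and k: "k \<noteq> N - 1" by simp_all
  then show ?case
    by (simp only: pstate.simps(2) Suc.IH lmpc_in_shift[OF k] nat.case(2))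
qed

lemma shift_lam_last_mem_Lam:
  assumes "safe_data A B W X U D CS" and "y \<in> CS"
  shows "shift_lam D N lam (N - 1) y \<in> Lam D y"
proof -
  obtain l where "l \<in> Lam D y" using Lam_nonempty assms unfolding safe_data_def by blast
  then show ?thesis unfolding shift_lam_def using someI[of "\<lambda>l. l \<in> Lam D y"] by simp
qed

lemma shifted_prediction_admissible:
  assumes feas: "lmpc_feasible A B W X U D CS N x Nt M g lam"
    and N: "1 \<le> N" and safe: "safe_data A B W X U D CS" and Uc: "convex U"
    and w0: "w0 \<in> W" and ws: "\<forall>k<N. ws k \<in> W"
  defines "p' \<equiv> pstate A B D (Nt - 1) (shift_M M) (shift_g M g w0) (shift_lam D N lam) ws
                  (A *v x + B *v lmpc_in D Nt M g lam (\<lambda>_. 0) x 0 + w0)"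
  shows "\<forall>k<N. p' k \<in> X
           \<and> lmpc_in D (Nt - 1) (shift_M M) (shift_g M g w0) (shift_lam D N lam) ws (p' k) k \<in> U
           \<and> (Nt - 1 \<le> k \<longrightarrow> shift_lam D N lam k (p' k) \<in> Lam D (p' k))"
    and "p' N \<in> CS"
proof -
  let ?M = "shift_M M" and ?g = "shift_g M g w0" and ?lam = "shift_lam D N lam"
  let ?ws = "case_nat w0 ws"
  let ?p = "pstate A B D Nt M g lam ?ws x"
  have "\<forall>k<N. ?ws k \<in> W" using ws w0 by (auto split: nat.split)
  then have NtN: "Nt \<le> N"
    and old: "\<And>k. k < N \<Longrightarrow> ?p k \<in> X \<and> lmpc_in D Nt M g lam ?ws (?p k) k \<in> U
                        \<and> (Nt \<le> k \<longrightarrow> lam k (?p k) \<in> Lam D (?p k))"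
    and old_end: "?p N \<in> CS"
    using feas unfolding lmpc_feasible_def by blast+
  let ?l = "?lam (N - 1) (?p N)"
  let ?u = "\<Sum>c\<in>D. ?l c *\<^sub>R fst (snd c)"
  have l: "?l \<in> Lam D (?p N)" using safe old_end by (rule shift_lam_last_mem_Lam)
  have p'_last: "p' (N - 1) = ?p N" unfolding p'_def using pstate_shift[of "N - 1" N] N by simp
  have u_last: "lmpc_in D (Nt - 1) ?M ?g ?lam ws (?p N) (N - 1) = ?u"
    using NtN by (simp add: lmpc_in_def)
  show "\<forall>k<N. p' k \<in> X \<and> lmpc_in D (Nt - 1) ?M ?g ?lam ws (p' k) k \<in> U
          \<and> (Nt - 1 \<le> k \<longrightarrow> ?lam k (p' k) \<in> Lam D (p' k))"
  proof (intro allI impI)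
    fix k assume "k < N"
    show "p' k \<in> X \<and> lmpc_in D (Nt - 1) ?M ?g ?lam ws (p' k) k \<in> U
          \<and> (Nt - 1 \<le> k \<longrightarrow> ?lam k (p' k) \<in> Lam D (p' k))"
    proof (cases "k = N - 1")
      case True
      have "?p N \<in> X" using old_end safe unfolding safe_data_def by blast
      then show ?thesis
        using True p'_last u_last l safe_data_barycentric_step(1)[OF safe Uc l w0] by simp
    next
      case False
      with \<open>k < N\<close> have "Suc k < N" by simp
      moreover have p'_k: "p' k = ?p (Suc k)"
        unfolding p'_def using \<open>k < N\<close> False by (intro pstate_shift) simp
      ultimately show ?thesis
        unfolding p'_k lmpc_in_shift[OF False] using old[of "Suc k"] False
        by (simp del: pstate.simps add: shift_lam_def)
    qed
  qed
  have "p' N = A *v ?p N + B *v ?u + ws (N - 1)"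
    using N p'_last u_last pstate.simps(2)[of A B D "Nt - 1" ?M ?g ?lam ws _ "N - 1"]
    unfolding p'_def by simp
  then show "p' N \<in> CS"
    using safe_data_barycentric_step(2)[OF safe Uc l] ws N by simp
qed

lemma lmpc_feasible_shift:
  assumes feas: "lmpc_feasible A B W X U D CS N x Nt M g lam"
    and "1 \<le> N" and "safe_data A B W X U D CS" and "convex U" and "w0 \<in> W"
  shows "lmpc_feasible A B W X U D CS N (A *v x + B *v lmpc_in D Nt M g lam (\<lambda>_. 0) x 0 + w0)
           (Nt - 1) (shift_M M) (shift_g M g w0) (shift_lam D N lam)"
proof -
  have "Nt \<le> N" using feas by (simp add: lmpc_feasible_def)
  then have "Nt - 1 \<le> N" by simp
  then show ?thesis
    using shifted_prediction_admissible[OF assms] unfolding lmpc_feasible_def by blast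
qed

lemma lmpc_value_less_PInfty:
  assumes feas: "lmpc_feasible A B W X U D CS N x Nt M g lam"
    and W0: "0 \<in> W" and safe: "safe_data A B W X U D CS"
  shows "lmpc_value A B W X U h D CS N x Nt < \<infinity>"
proof -
  let ?p = "pstate A B D Nt M g lam (\<lambda>_. 0) x"
  have "?p N \<in> CS" using feas W0 unfolding lmpc_feasible_def by auto
  then have "Qof D (?p N) < \<infinity>"
    using safe unfolding safe_data_def by (intro Qof_less_PInfty) auto
  then have cost: "lmpc_cost A B h D N x Nt M g lam < \<infinity>"
    unfolding lmpc_cost_def by (simp add: sum_Pinfty less_top[symmetric])
  have "lmpc_value A B W X U h D CS N x Nt \<le> lmpc_cost A B h D N x Nt M g lam"
    unfolding lmpc_value_def using feas by (intro INF_lower2[of "(M, g, lam)"]) auto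
  then show ?thesis using cost by (rule order.strict_trans1)
qed

lemma lmpc_feasible_first_step:
  assumes "lmpc_feasible A B W X U D CS N x Nt M g lam" and "0 \<in> W" and "1 \<le> N"
  shows "x \<in> X" and "lmpc_in D Nt M g lam (\<lambda>_. 0) x 0 \<in> U"
  using assms unfolding lmpc_feasible_def by (auto dest!: spec[of _ "\<lambda>_. 0"])

theorem theorem1:
  fixes A :: "real^'n^'n" and B :: "real^'d^'n" and K :: "real^'n^'d"
    and W Ob X :: "(real^'n) set" and U :: "(real^'d) set"
    and h :: "real^'n \<Rightarrow> real^'d \<Rightarrow> real" and N j :: nat
    and T :: "nat \<Rightarrow> nat" and xt wt :: "nat \<Rightarrow> nat \<Rightarrow> real^'n"
    and pol :: "nat \<Rightarrow> nat \<Rightarrow> nat \<Rightarrow> real^'n \<Rightarrow> real^'d"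
    and xcl wcl :: "nat \<Rightarrow> real^'n" and ucl :: "nat \<Rightarrow> real^'d" and Ncl :: "nat \<Rightarrow> nat"
    and Mcl :: "nat \<Rightarrow> nat \<Rightarrow> nat \<Rightarrow> real^'n^'d" and gcl :: "nat \<Rightarrow> nat \<Rightarrow> real^'d"
    and lcl :: "nat \<Rightarrow> nat \<Rightarrow> real^'n \<Rightarrow> ('n, 'd) col \<Rightarrow> real"
  assumes W: "polytope W" "0 \<in> W"
    and X: "convex X" "compact X" "0 \<in> X"
    and U: "convex U" "compact U" "0 \<in> U"
    and Ob: "polyhedron Ob" "Ob \<subseteq> X" "(\<lambda>x. K *v x) ` Ob \<subseteq> U"
           "\<forall>x\<in>Ob. \<forall>w\<in>W. (A + B ** K) *v x + w \<in> Ob"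
    and h_cont: "continuous_on UNIV (\<lambda>p. h (fst p) (snd p))"
    and h_convex: "convex_on UNIV (\<lambda>p. h (fst p) (snd p))"
    and h_bounds: "\<exists>alx aux alu auu. Kinf alx \<and> Kinf aux \<and> Kinf alu \<and> Kinf auu \<and>
        (\<forall>x. alx (infdist x Ob) \<le> h x 0 \<and> h x 0 \<le> aux (infdist x Ob)) \<and>
        (\<forall>u. alu (infdist u ((\<lambda>x. K *v x) ` Ob)) \<le> h 0 u \<and>
             h 0 u \<le> auu (infdist u ((\<lambda>x. K *v x) ` Ob)))"
    and N: "N \<ge> 1"
    and j: "j \<ge> 1"
    and iter_traj: "\<forall>i. 1 \<le> i \<and> i < j \<longrightarrow> (\<forall>t<T i.
        xt i (Suc t) = A *v xt i t + B *v pol i t t (xt i t) + wt i t \<and> wt i t \<in> W)"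
    and iter_constr: "\<forall>i. 1 \<le> i \<and> i < j \<longrightarrow> (\<forall>t\<le>T i. \<forall>k<N.
        \<forall>x\<in>reach A B W xt pol i t k. x \<in> X \<and> pol i t (t + k) x \<in> U)"
    and iter_term: "\<forall>i. 1 \<le> i \<and> i < j \<longrightarrow> (\<forall>t\<le>T i.
        reach A B W xt pol i t N \<subseteq> CSset A B W N Ob T xt pol (i - 1))"
    and iter_poly: "\<forall>i. 1 \<le> i \<and> i < j \<longrightarrow> (\<forall>t\<le>T i. \<forall>k\<le>N.
        polytope (reach A B W xt pol i t k))"
    and x0: "\<exists>N0\<le>N. lmpc_value A B W X U h (Dset A B W h N K Ob T xt pol (j - 1))
                  (CSset A B W N Ob T xt pol (j - 1)) N (xcl 0) N0 < \<infinity>"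
    and w_cl: "\<forall>t. wcl t \<in> W"
    and u_cl: "\<forall>t. ucl t = lmpc_in (Dset A B W h N K Ob T xt pol (j - 1)) (Ncl t) (Mcl t) (gcl t)
                             (lcl t) (\<lambda>_. 0) (xcl t) 0"
    and x_cl: "\<forall>t. xcl (Suc t) = A *v xcl t + B *v ucl t + wcl t"
    and opt: "\<forall>t. (\<exists>N'\<le>N. lmpc_value A B W X U h (Dset A B W h N K Ob T xt pol (j - 1))
                  (CSset A B W N Ob T xt pol (j - 1)) N (xcl t) N' < \<infinity>) \<longrightarrow>
        (lmpc_feasible A B W X U (Dset A B W h N K Ob T xt pol (j - 1))
            (CSset A B W N Ob T xt pol (j - 1)) N (xcl t) (Ncl t) (Mcl t) (gcl t) (lcl t)
         \<and> lmpc_cost A B h (Dset A B W h N K Ob T xt pol (j - 1)) N (xcl t) (Ncl t) (Mcl t) (gcl t) (lcl t)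
             = lmpc_value A B W X U h (Dset A B W h N K Ob T xt pol (j - 1))
                  (CSset A B W N Ob T xt pol (j - 1)) N (xcl t) (Ncl t)
         \<and> (\<forall>N'\<le>N. lmpc_value A B W X U h (Dset A B W h N K Ob T xt pol (j - 1))
                  (CSset A B W N Ob T xt pol (j - 1)) N (xcl t) (Ncl t)
               \<le> lmpc_value A B W X U h (Dset A B W h N K Ob T xt pol (j - 1))
                  (CSset A B W N Ob T xt pol (j - 1)) N (xcl t) N'))"
  shows "\<forall>t. (\<exists>Nt\<le>N. lmpc_value A B W X U h (Dset A B W h N K Ob T xt pol (j - 1))
                  (CSset A B W N Ob T xt pol (j - 1)) N (xcl t) Nt < \<infinity>)
            \<and> xcl t \<in> X \<and> ucl t \<in> U"
proof -
  let ?D = "Dset A B W h N K Ob T xt pol (j - 1)"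
  let ?CS = "CSset A B W N Ob T xt pol (j - 1)"
  have "bounded Ob" using Ob(2) X(2) compact_imp_bounded bounded_subset by blast
  then have safe: "safe_data A B W X U ?D ?CS"
    using safe_data_Dset[OF W(2) X(1) Ob(1) _ Ob(2-4) iter_constr iter_term iter_poly] j by simp
  have feasible: "\<exists>Nt\<le>N. lmpc_value A B W X U h ?D ?CS N (xcl t) Nt < \<infinity>" for t
  proof (induction t)
    case 0
    show ?case by (rule x0)
  next
    case (Suc t)
    then have "lmpc_feasible A B W X U ?D ?CS N (xcl t) (Ncl t) (Mcl t) (gcl t) (lcl t)"
      using opt by blast
    then have shifted: "lmpc_feasible A B W X U ?D ?CS N (xcl (Suc t)) (Ncl t - 1)
        (shift_M (Mcl t)) (shift_g (Mcl t) (gcl t) (wcl t)) (shift_lam ?D N (lcl t))"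
      unfolding x_cl[rule_format] u_cl[rule_format]
      using N safe U(1) w_cl by (intro lmpc_feasible_shift) auto
    then have "Ncl t - 1 \<le> N" by (simp add: lmpc_feasible_def)
    moreover have "lmpc_value A B W X U h ?D ?CS N (xcl (Suc t)) (Ncl t - 1) < \<infinity>"
      using shifted W(2) safe by (rule lmpc_value_less_PInfty)
    ultimately show ?case by blast
  qed
  show ?thesis
  proof
    fix t
    have feas: "lmpc_feasible A B W X U ?D ?CS N (xcl t) (Ncl t) (Mcl t) (gcl t) (lcl t)"
      using opt feasible by blast
    show "(\<exists>Nt\<le>N. lmpc_value A B W X U h ?D ?CS N (xcl t) Nt < \<infinity>) \<and> xcl t \<in> X \<and> ucl t \<in> U"
      using feasible lmpc_feasible_first_step[OF feas W(2) N] u_cl by simp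
  qed
qed

end
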